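(* Let $\langle f,g\rangle$ be a pencil of plane cubics and suppose that $H(g)$ is defined, distinct from $g$, and $H(g)\in\langle f,g\rangle$. Then for any $C\in SL(3)$ such that $H(C\cdot g)\in\langle f,C\cdot g\rangle$, we have $C\cdot\langle f,g\rangle=\langle f,C\cdot g\rangle$.
   Context: Plane cubics up to scalar are points of $\mathbb{P}^9$; $\langle f,g\rangle$ denotes the line (pencil) spanned by $f,g$. $H(g)=\det(\partial^2g/\partial x_i\partial x_j)$ is the Hessian; "defined" means not identically zero, and "distinct from $g$" means not proportional to $g$. $SL(3)$ acts on cubics by linear change of variables $x,y,z$, and hence on pencils. *)

theory Defs
  imports "HOL-Analysis.Analysis"
begin

text \<open>Plane cubics over the complex numbers, represented as the homogeneous cubic
polynomial functions on complex 3-space (over an infinite field a polynomial is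
determined by its function).\<close>

type_synonym form3 = "complex ^ 3 \<Rightarrow> complex"

definition is_cubic :: "form3 \<Rightarrow> bool" where
  "is_cubic F \<longleftrightarrow> (\<exists>c :: nat \<Rightarrow> nat \<Rightarrow> complex.
      F = (\<lambda>v. \<Sum>i\<le>3. \<Sum>j\<le>3 - i. c i j * v$1 ^ i * v$2 ^ j * v$3 ^ (3 - i - j)))"

definition pdiff :: "3 \<Rightarrow> form3 \<Rightarrow> form3" where
  "pdiff i F = (\<lambda>v. deriv (\<lambda>t. F (v + t *s axis i 1)) 0)"

definition hessian :: "form3 \<Rightarrow> form3" where
  "hessian F = (\<lambda>v. det (\<chi> i j. pdiff i (pdiff j F) v))"

definition pencil :: "form3 \<Rightarrow> form3 \<Rightarrow> form3 set" where
  "pencil F G = {(\<lambda>v. a * F v + b * G v) | a b. True}"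

definition lin_indep2 :: "form3 \<Rightarrow> form3 \<Rightarrow> bool" where
  "lin_indep2 F G \<longleftrightarrow> (\<forall>a b. (\<lambda>v. a * F v + b * G v) = (\<lambda>v. 0) \<longrightarrow> a = 0 \<and> b = 0)"

definition proportional :: "form3 \<Rightarrow> form3 \<Rightarrow> bool" where
  "proportional F G \<longleftrightarrow> \<not> lin_indep2 F G"

definition act :: "complex ^ 3 ^ 3 \<Rightarrow> form3 \<Rightarrow> form3" where
  "act C F = (\<lambda>v. F (C *v v))"

end

theory Submission
  imports Defs
begin

text \<open>The Hessian is a relative invariant: for polynomial F,
H(C \<cdot> F) = (det C)^2 (C \<cdot> H(F)), so for C \<in> SL(3) it commutes with the action.
Since H(g) lies in \<langle>f,g\<rangle> but is not proportional to g, the exchange lemma gives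
\<langle>f,g\<rangle> = \<langle>H(g),g\<rangle>; likewise \<langle>f,C\<cdot>g\<rangle> = \<langle>H(C\<cdot>g),C\<cdot>g\<rangle>.  Hence
C\<cdot>\<langle>f,g\<rangle> = \<langle>C\<cdot>H(g),C\<cdot>g\<rangle> = \<langle>H(C\<cdot>g),C\<cdot>g\<rangle> = \<langle>f,C\<cdot>g\<rangle>.\<close>

inductive polyfun :: "form3 \<Rightarrow> bool" where
  const: "polyfun (\<lambda>v. c)"
| coord: "polyfun (\<lambda>v. v $ m)"
| add: "polyfun F \<Longrightarrow> polyfun G \<Longrightarrow> polyfun (\<lambda>v. F v + G v)"
| mult: "polyfun F \<Longrightarrow> polyfun G \<Longrightarrow> polyfun (\<lambda>v. F v * G v)"

lemma polyfun_sum: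
  assumes "finite S" "\<And>x. x \<in> S \<Longrightarrow> polyfun (F x)"
  shows "polyfun (\<lambda>v. \<Sum>x\<in>S. F x v)"
  using assms
proof (induction S rule: finite_induct)
  case empty
  then show ?case using polyfun.const[of 0] by simp
next
  case (insert x S)
  then show ?case using polyfun.add[of "F x" "\<lambda>v. \<Sum>x\<in>S. F x v"] by simp
qed

lemma polyfun_power: "polyfun F \<Longrightarrow> polyfun (\<lambda>v. F v ^ n)"
proof (induction n)
  case 0
  then show ?case using polyfun.const[of 1] by simp
next
  case (Suc n)
  then show ?case using polyfun.mult[of F "\<lambda>v. F v ^ n"] by simp
qed

lemma polyfun_linear: "polyfun (\<lambda>v. \<Sum>k\<in>UNIV. c k * v $ k)"
  by (intro polyfun_sum polyfun.mult polyfun.const polyfun.coord) simp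

lemma cubic_polyfun: "is_cubic F \<Longrightarrow> polyfun F"
  unfolding is_cubic_def
  by (auto intro!: polyfun_sum polyfun.mult polyfun.const polyfun_power polyfun.coord)

lemma polyfun_act: "polyfun F \<Longrightarrow> polyfun (act C F)"
proof (induction rule: polyfun.induct)
  case (coord m)
  have "act C (\<lambda>v. v $ m) = (\<lambda>v. \<Sum>k\<in>UNIV. C $ m $ k * v $ k)"
    by (simp add: act_def matrix_vector_mult_def)
  then show ?case using polyfun_linear by simp
qed (simp_all add: act_def polyfun.intros)

lemma polyfun_line_differentiable:
  "polyfun F \<Longrightarrow> (\<lambda>t. F (v + t *s w)) field_differentiable at t0"
proof (induction rule: polyfun.induct)
  case (coord m)
  have "(\<lambda>t. (v + t *s w) $ m) = (\<lambda>t. v $ m + t * w $ m)" by auto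
  then show ?case by (auto intro!: derivative_intros)
qed (auto intro!: field_differentiable_add field_differentiable_mult)

lemma pdiff_const [simp]: "pdiff i (\<lambda>v. c) = (\<lambda>v. 0)"
  unfolding pdiff_def by simp

lemma pdiff_coord: "pdiff i (\<lambda>v. v $ m) = (\<lambda>v. if m = i then 1 else 0)"
proof (rule ext)
  fix v :: "complex ^ 3"
  define c :: complex where "c = (if m = i then 1 else 0)"
  have line: "(\<lambda>t. (v + t *s axis i 1) $ m) = (\<lambda>t. v $ m + t * c)"
    by (auto simp: axis_def c_def)
  have "((\<lambda>t. v $ m + t * c) has_field_derivative c) (at 0)"
    by (auto intro!: derivative_eq_intros)
  then show "pdiff i (\<lambda>v. v $ m) v = (if m = i then 1 else 0)"
    unfolding pdiff_def line c_def by (rule DERIV_imp_deriv)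
qed

lemma pdiff_add:
  "polyfun F \<Longrightarrow> polyfun G \<Longrightarrow> pdiff i (\<lambda>v. F v + G v) = (\<lambda>v. pdiff i F v + pdiff i G v)"
  unfolding pdiff_def by (auto intro!: ext deriv_add polyfun_line_differentiable)

lemma pdiff_mult:
  "polyfun F \<Longrightarrow> polyfun G \<Longrightarrow>
    pdiff i (\<lambda>v. F v * G v) = (\<lambda>v. pdiff i F v * G v + F v * pdiff i G v)"
  unfolding pdiff_def by (auto simp: polyfun_line_differentiable intro!: ext)

lemma pdiff_cmult: "polyfun F \<Longrightarrow> pdiff i (\<lambda>v. c * F v) = (\<lambda>v. c * pdiff i F v)"
  using pdiff_mult[of "\<lambda>v. c" F i] polyfun.const[of c] by simp

lemma pdiff_sum:
  "finite S \<Longrightarrow> (\<And>x. x \<in> S \<Longrightarrow> polyfun (F x)) \<Longrightarrow>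
    pdiff i (\<lambda>v. \<Sum>x\<in>S. F x v) = (\<lambda>v. \<Sum>x\<in>S. pdiff i (F x) v)"
proof (induction S rule: finite_induct)
  case (insert x S)
  then show ?case
    using pdiff_add[of "F x" "\<lambda>v. \<Sum>x\<in>S. F x v" i] polyfun_sum[of S F] by simp
qed simp

lemma pdiff_linear_combination:
  fixes F :: "3 \<Rightarrow> form3"
  shows "(\<And>k. polyfun (F k)) \<Longrightarrow>
    pdiff i (\<lambda>v. \<Sum>k\<in>UNIV. c k * F k v) = (\<lambda>v. \<Sum>k\<in>UNIV. c k * pdiff i (F k) v)"
  by (subst pdiff_sum) (auto simp: pdiff_cmult intro!: polyfun.mult polyfun.const)

lemma polyfun_pdiff: "polyfun F \<Longrightarrow> polyfun (pdiff i F)"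
proof (induction rule: polyfun.induct)
  case (coord m)
  then show ?case by (simp add: pdiff_coord polyfun.const)
qed (simp_all add: pdiff_add pdiff_mult polyfun.intros)

lemma pdiff_act:
  "polyfun F \<Longrightarrow> pdiff i (act C F) = act C (\<lambda>u. \<Sum>k\<in>UNIV. C $ k $ i * pdiff k F u)"
proof (induction rule: polyfun.induct)
  case (const c)
  show ?case by (simp add: act_def)
next
  case (coord m)
  have "pdiff i (act C (\<lambda>v. v $ m)) = pdiff i (\<lambda>v. \<Sum>k\<in>UNIV. C $ m $ k * v $ k)"
    by (simp add: act_def matrix_vector_mult_def)
  also have "\<dots> = (\<lambda>v. \<Sum>k\<in>UNIV. C $ m $ k * (if k = i then 1 else 0))"
    by (simp add: pdiff_linear_combination polyfun.coord pdiff_coord)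
  finally show ?case by (simp add: act_def pdiff_coord if_distrib cong: if_cong)
next
  case (add F G)
  have "act C (\<lambda>v. F v + G v) = (\<lambda>v. act C F v + act C G v)"
    by (simp add: act_def)
  then have "pdiff i (act C (\<lambda>v. F v + G v)) = (\<lambda>v. pdiff i (act C F) v + pdiff i (act C G) v)"
    using add.hyps by (simp add: pdiff_add polyfun_act)
  with add show ?case
    by (simp add: act_def pdiff_add sum.distrib distrib_left)
next
  case (mult F G)
  have "act C (\<lambda>v. F v * G v) = (\<lambda>v. act C F v * act C G v)"
    by (simp add: act_def)
  then have "pdiff i (act C (\<lambda>v. F v * G v)) =
      (\<lambda>v. pdiff i (act C F) v * act C G v + act C F v * pdiff i (act C G) v)"
    using mult.hyps by (simp add: pdiff_mult polyfun_act)
  with mult show ?case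
    by (simp add: act_def pdiff_mult sum_distrib_left sum_distrib_right sum.distrib
        algebra_simps)
qed

definition hessian_matrix :: "form3 \<Rightarrow> complex ^ 3 \<Rightarrow> complex ^ 3 ^ 3" where
  "hessian_matrix F v = (\<chi> i j. pdiff i (pdiff j F) v)"

lemma hessian_eq_det_hessian_matrix: "hessian F v = det (hessian_matrix F v)"
  by (simp add: hessian_def hessian_matrix_def)

lemma hessian_matrix_act:
  assumes "polyfun F"
  shows "hessian_matrix (act C F) v = transpose C ** hessian_matrix F (C *v v) ** C"
proof -
  define M where "M = hessian_matrix F (C *v v)"
  have "pdiff i (pdiff j (act C F)) v
      = (\<Sum>l\<in>UNIV. C $ l $ i * (\<Sum>k\<in>UNIV. C $ k $ j * M $ l $ k))" for i j
  proof -
    have "pdiff i (pdiff j (act C F)) =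
        act C (\<lambda>u. \<Sum>l\<in>UNIV. C $ l $ i * pdiff l (\<lambda>u. \<Sum>k\<in>UNIV. C $ k $ j * pdiff k F u) u)"
      using assms by (simp add: pdiff_act polyfun_pdiff polyfun_sum polyfun.mult polyfun.const)
    then show ?thesis
      using assms
      by (simp add: pdiff_linear_combination polyfun_pdiff act_def M_def hessian_matrix_def)
  qed
  moreover have "(\<Sum>l\<in>UNIV. C $ l $ i * (\<Sum>k\<in>UNIV. C $ k $ j * M $ l $ k))
      = (\<Sum>k\<in>UNIV. (\<Sum>l\<in>UNIV. C $ l $ i * M $ l $ k) * C $ k $ j)" for i j
    unfolding sum_distrib_left sum_distrib_right
    by (subst sum.swap) (simp add: mult_ac)
  ultimately show ?thesis
    unfolding M_def
    by (simp add: hessian_matrix_def vec_eq_iff matrix_matrix_mult_def transpose_def)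
qed

lemma hessian_act:
  assumes "polyfun F"
  shows "hessian (act C F) = (\<lambda>v. det C ^ 2 * act C (hessian F) v)"
  unfolding hessian_eq_det_hessian_matrix hessian_matrix_act[OF assms]
  by (simp add: det_mul det_transpose act_def power2_eq_square mult_ac)

lemma pencil_subset:
  assumes "F' \<in> pencil F G" "G' \<in> pencil F G"
  shows "pencil F' G' \<subseteq> pencil F G"
proof
  fix K assume "K \<in> pencil F' G'"
  then obtain x y where K: "K = (\<lambda>v. x * F' v + y * G' v)"
    unfolding pencil_def by blast
  obtain a b c d where "F' = (\<lambda>v. a * F v + b * G v)" "G' = (\<lambda>v. c * F v + d * G v)"
    using assms unfolding pencil_def by blast
  then have "K = (\<lambda>v. (x * a + y * c) * F v + (x * b + y * d) * G v)"
    unfolding K by (simp add: fun_eq_iff algebra_simps)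
  then show "K \<in> pencil F G"
    unfolding pencil_def by blast
qed

lemma right_mem_pencil: "G \<in> pencil F G"
  unfolding pencil_def by (rule CollectI, rule exI[of _ 0], rule exI[of _ 1]) simp

lemma pencil_exchange:
  assumes indep: "lin_indep2 H G" and H: "H \<in> pencil F G"
  shows "pencil H G = pencil F G"
proof
  show "pencil H G \<subseteq> pencil F G"
    using H right_mem_pencil by (rule pencil_subset)
next
  obtain a b where ab: "H = (\<lambda>v. a * F v + b * G v)"
    using H unfolding pencil_def by blast
  have "a \<noteq> 0"
  proof
    assume "a = 0"
    then have "(\<lambda>v. 1 * H v + (- b) * G v) = (\<lambda>v. 0)"
      using ab by simp
    then show False
      using indep unfolding lin_indep2_def by fastforce
  qed
  then have "F = (\<lambda>v. (1 / a) * H v + (- b / a) * G v)"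
    using ab by (simp add: fun_eq_iff field_simps)
  then have "F \<in> pencil H G"
    unfolding pencil_def by blast
  then show "pencil F G \<subseteq> pencil H G"
    using right_mem_pencil by (rule pencil_subset)
qed

lemma act_pencil: "act C ` pencil F G = pencil (act C F) (act C G)"
  unfolding pencil_def act_def
  by (auto, rule_tac x="\<lambda>v. a * F v + b * G v" in image_eqI, auto)

lemma lin_indep2_act:
  assumes "lin_indep2 F G" "invertible C"
  shows "lin_indep2 (act C F) (act C G)"
  unfolding lin_indep2_def
proof (intro allI impI)
  fix a b
  assume zero: "(\<lambda>v. a * act C F v + b * act C G v) = (\<lambda>v. 0)"
  obtain B where "C ** B = mat 1"
    using assms(2) unfolding invertible_def by blast
  then have CB: "C *v (B *v u) = u" for u
    by (metis matrix_vector_mul_assoc matrix_vector_mul_lid)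
  have "(\<lambda>u. a * F u + b * G u) = (\<lambda>v. 0)"
  proof
    fix u
    show "a * F u + b * G u = 0"
      using fun_cong[OF zero, of "B *v u"] by (simp add: act_def CB)
  qed
  then show "a = 0 \<and> b = 0"
    using assms(1) unfolding lin_indep2_def by blast
qed

theorem mainTheorem13:
  fixes f g :: form3 and C :: "complex ^ 3 ^ 3"
  assumes "is_cubic f" and "is_cubic g" and "lin_indep2 f g"
    and "hessian g \<noteq> (\<lambda>v. 0)"
    and "\<not> proportional (hessian g) g"
    and "hessian g \<in> pencil f g"
    and "det C = 1"
    and "hessian (act C g) \<in> pencil f (act C g)"
  shows "act C ` pencil f g = pencil f (act C g)"
proof -
  have indep: "lin_indep2 (hessian g) g"
    using assms(5) unfolding proportional_def by simp
  have hessian_Cg: "hessian (act C g) = act C (hessian g)"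
    using hessian_act[OF cubic_polyfun[OF assms(2)]] assms(7) by simp
  have "invertible C"
    using assms(7) by (simp add: invertible_det_nz)
  with indep have indep_C: "lin_indep2 (hessian (act C g)) (act C g)"
    unfolding hessian_Cg by (rule lin_indep2_act)
  have "act C ` pencil f g = act C ` pencil (hessian g) g"
    using pencil_exchange[OF indep assms(6)] by simp
  also have "\<dots> = pencil (hessian (act C g)) (act C g)"
    by (simp add: act_pencil hessian_Cg)
  also have "\<dots> = pencil f (act C g)"
    using indep_C assms(8) by (rule pencil_exchange)
  finally show ?thesis .
qed

end
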